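(* Let $(u,K)$ be a Griffith almost-minimizer in $\Omega$ with gauge $h$, and let $x_0\in K$, $r_0>0$ with $B(x_0,r_0)\subset\Omega$. Suppose that $\beta_K(x_0,r_0)\le\tau/10$ and that $E$ is a minimal separating extension of $K$ in $B(x_0,r_0)$, and let $\sigma$ be the stopping time function defined with respect to $E$. Then for each $x\in K\cap B(x_0,9r_0/10)$ and $t\in(\sigma(x),r_0/10]$ we have $$\beta_K(x,t)\le\tau\quad\text{and}\quad\beta_E(x,t)\le4\tau.$$
   Context: Let $\Omega\subset\mathbb{R}^2$ be open and fix a linear map $\mathbb{C}:\mathbb{R}^{2\times2}\to\mathbb{R}^{2\times2}_{\rm sym}$ with $\mathbb{C}(\xi-\xi^T)=0$ and $\mathbb{C}\xi:\xi\ge c_0|\xi+\xi^T|^2$ for all $\xi$, some $c_0>0$. $e(u)=(\nabla u+\nabla u^T)/2$; $B(x,r)$ open ball. Admissible pair: $K\subset\Omega$ relatively closed, $u\in W^{1,2}_{\rm loc}(\Omega\setminus K;\mathbb{R}^2)$. For $\overline{B(x,r)}\subset\Omega$, a competitor in $B(x,r)$ is an admissible $(v,L)$ with $L\setminus B(x,r)=K\setminus B(x,r)$, $v=u$ a.e. in $\Omega\setminus(K\cup B(x,r))$. Gauge: non-decreasing $h:(0,\infty)\to[0,\infty]$, $h(0^+)=0$. Coral: $\mathcal{H}^1(K\cap B(x,r))>0$ for $x\in K$, $r>0$. A Griffith almost-minimizer with gauge $h$ is an admissible coral pair of locally finite energy with $\int_{B(x,r)\setminus K}\mathbb{C}e(u):e(u)+\mathcal{H}^1(K\cap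 B(x,r))\le\int_{B(x,r)\setminus L}\mathbb{C}e(v):e(v)+\mathcal{H}^1(L\cap B(x,r))+h(r)r$ for all $\overline{B(x,r)}\subset\Omega$ and competitors $(v,L)$. Flatness: for $F\ni x$, $\beta_F(x,r)=r^{-1}\inf_\ell\sup_{y\in F\cap B(x,r)}\mathrm{dist}(y,\ell)$ over lines through $x$; $\nu$ unit normal of a minimizing line, $D^\pm_t(x,r)=\{z\in B(x,r):\pm(z-x)\cdot\nu>t\}$. $F$ separates $B(x,r)$ if $\beta:=\beta_F(x,r)\le1/2$ and $D^\pm_{\beta r}(x,r)$ lie in distinct connected components of $B(x,r)\setminus F$. A separating extension of $K$ in $B(x_0,r_0)$ is a relatively closed coral $E\subset B(x_0,r_0)$ with $K\cap B(x_0,r_0)\subset E$, $\beta_E(x_0,r_0)=\beta_K(x_0,r_0)$, $E$ separating $B(x_0,r_0)$; a minimal separating extension minimizes $\mathcal{H}^1(E\setminus K)$ among them. Stopping time: $\tau=10^{-10}$. For $x\in K\cap B(x_0,9r_0/10)$ and $t\in(0,r_0/10)$, $B(x,t)$ is a good ball if $\beta_K(x,t)\le\tau$ and $t^{-1}\mathcal{H}^1((E\cap B(x,t))\setminus K)\le\tau$; $\sigma(x)=\inf\{r>0: B(x,t)\text{ is good for all }t\in[r,r_0/10]\}$. *)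

theory Defs
  imports "HOL-Analysis.Analysis"
begin

type_synonym pt = "real^2"
type_synonym mat2 = "real^2^2"

definition H1_delta :: "real \<Rightarrow> pt set \<Rightarrow> ennreal" where
  "H1_delta \<delta> A = (INF C \<in> {C :: nat \<Rightarrow> pt set. A \<subseteq> (\<Union>i. C i) \<and>
       (\<forall>i. bounded (C i) \<and> diameter (C i) \<le> \<delta>)}. (\<Sum>i. ennreal (diameter (C i))))"

definition H1 :: "pt set \<Rightarrow> ennreal" where
  "H1 A = (SUP \<delta> \<in> {0<..}. H1_delta \<delta> A)"

definition loc_L2 :: "pt set \<Rightarrow> (pt \<Rightarrow> 'b::euclidean_space) \<Rightarrow> bool" where
  "loc_L2 U f \<longleftrightarrow> set_borel_measurable lebesgue U f \<and>
     (\<forall>S. compact S \<and> S \<subseteq> U \<longrightarrow> set_integrable lebesgue S (\<lambda>z. (norm (f z))\<^sup>2))"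

definition pderiv_j :: "(pt \<Rightarrow> real) \<Rightarrow> 2 \<Rightarrow> pt \<Rightarrow> real" where
  "pderiv_j \<phi> j z = frechet_derivative \<phi> (at z) (axis j 1)"

definition test_fun :: "pt set \<Rightarrow> (pt \<Rightarrow> real) \<Rightarrow> bool" where
  "test_fun U \<phi> \<longleftrightarrow> (\<forall>z. \<phi> differentiable (at z)) \<and>
     (\<forall>j. continuous_on UNIV (pderiv_j \<phi> j)) \<and>
     compact (closure {z. \<phi> z \<noteq> 0}) \<and> closure {z. \<phi> z \<noteq> 0} \<subseteq> U"

text \<open>G z $ i $ j is the weak partial derivative of the i-th component w.r.t. x_j.\<close>
definition is_weak_grad :: "pt set \<Rightarrow> (pt \<Rightarrow> pt) \<Rightarrow> (pt \<Rightarrow> mat2) \<Rightarrow> bool" where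
  "is_weak_grad U u G \<longleftrightarrow> loc_L2 U u \<and> loc_L2 U G \<and>
     (\<forall>\<phi>. test_fun U \<phi> \<longrightarrow> (\<forall>i j.
        (\<integral>z. u z $ i * pderiv_j \<phi> j z \<partial>lebesgue) = - (\<integral>z. G z $ i $ j * \<phi> z \<partial>lebesgue)))"

definition W12_loc :: "pt set \<Rightarrow> (pt \<Rightarrow> pt) \<Rightarrow> bool" where
  "W12_loc U u \<longleftrightarrow> (\<exists>G. is_weak_grad U u G)"

definition wgrad :: "pt set \<Rightarrow> (pt \<Rightarrow> pt) \<Rightarrow> pt \<Rightarrow> mat2" where
  "wgrad U u = (SOME G. is_weak_grad U u G)"

definition symgrad :: "pt set \<Rightarrow> (pt \<Rightarrow> pt) \<Rightarrow> pt \<Rightarrow> mat2" where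
  "symgrad U u z = (1/2) *\<^sub>R (wgrad U u z + transpose (wgrad U u z))"

text \<open>Elastic energy of (u,K) in the set A, the domain being \<Omega>. The Frobenius product
  \<xi>:\<eta> is the inner product on real^2^2.\<close>
definition energy :: "(mat2 \<Rightarrow> mat2) \<Rightarrow> pt set \<Rightarrow> (pt \<Rightarrow> pt) \<Rightarrow> pt set \<Rightarrow> pt set \<Rightarrow> ennreal" where
  "energy C \<Omega> u K A = (\<integral>\<^sup>+ z \<in> A - K. ennreal (C (symgrad (\<Omega> - K) u z) \<bullet> symgrad (\<Omega> - K) u z) \<partial>lebesgue)"

definition elasticity_tensor :: "(mat2 \<Rightarrow> mat2) \<Rightarrow> real \<Rightarrow> bool" where
  "elasticity_tensor C c0 \<longleftrightarrow> linear C \<and> c0 > 0 \<and>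
     (\<forall>\<xi>. transpose (C \<xi>) = C \<xi>) \<and>
     (\<forall>\<xi>. C (\<xi> - transpose \<xi>) = 0) \<and>
     (\<forall>\<xi>. C \<xi> \<bullet> \<xi> \<ge> c0 * (norm (\<xi> + transpose \<xi>))\<^sup>2)"

definition admissible :: "pt set \<Rightarrow> (pt \<Rightarrow> pt) \<Rightarrow> pt set \<Rightarrow> bool" where
  "admissible \<Omega> u K \<longleftrightarrow> K \<subseteq> \<Omega> \<and> closedin (top_of_set \<Omega>) K \<and> W12_loc (\<Omega> - K) u"

definition competitor :: "pt set \<Rightarrow> (pt \<Rightarrow> pt) \<Rightarrow> pt set \<Rightarrow> pt \<Rightarrow> real \<Rightarrow> (pt \<Rightarrow> pt) \<Rightarrow> pt set \<Rightarrow> bool" where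
  "competitor \<Omega> u K x r v L \<longleftrightarrow> admissible \<Omega> v L \<and> L - ball x r = K - ball x r \<and>
     (AE z in lebesgue. z \<in> \<Omega> - (K \<union> ball x r) \<longrightarrow> v z = u z)"

definition gauge :: "(real \<Rightarrow> ennreal) \<Rightarrow> bool" where
  "gauge h \<longleftrightarrow> mono_on {0<..} h \<and> (h \<longlongrightarrow> 0) (at_right 0)"

definition coral :: "pt set \<Rightarrow> bool" where
  "coral K \<longleftrightarrow> (\<forall>x\<in>K. \<forall>r>0. H1 (K \<inter> ball x r) > 0)"

definition loc_finite_energy :: "(mat2 \<Rightarrow> mat2) \<Rightarrow> pt set \<Rightarrow> (pt \<Rightarrow> pt) \<Rightarrow> pt set \<Rightarrow> bool" where
  "loc_finite_energy C \<Omega> u K \<longleftrightarrow> (\<forall>x r. r > 0 \<and> cball x r \<subseteq> \<Omega> \<longrightarrow>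
     energy C \<Omega> u K (ball x r) + H1 (K \<inter> ball x r) < \<infinity>)"

definition griffith_almost_min ::
  "(mat2 \<Rightarrow> mat2) \<Rightarrow> pt set \<Rightarrow> (real \<Rightarrow> ennreal) \<Rightarrow> (pt \<Rightarrow> pt) \<Rightarrow> pt set \<Rightarrow> bool" where
  "griffith_almost_min C \<Omega> h u K \<longleftrightarrow> admissible \<Omega> u K \<and> coral K \<and> loc_finite_energy C \<Omega> u K \<and>
     (\<forall>x r v L. r > 0 \<and> cball x r \<subseteq> \<Omega> \<and> competitor \<Omega> u K x r v L \<longrightarrow>
        energy C \<Omega> u K (ball x r) + H1 (K \<inter> ball x r)
          \<le> energy C \<Omega> v L (ball x r) + H1 (L \<inter> ball x r) + h r * ennreal r)"

definition line_normal :: "pt \<Rightarrow> pt \<Rightarrow> pt set" where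
  "line_normal x \<nu> = {y. (y - x) \<bullet> \<nu> = 0}"

definition flat_dev :: "pt set \<Rightarrow> pt \<Rightarrow> real \<Rightarrow> pt \<Rightarrow> real" where
  "flat_dev F x r \<nu> = (SUP y \<in> F \<inter> ball x r. infdist y (line_normal x \<nu>))"

definition beta :: "pt set \<Rightarrow> pt \<Rightarrow> real \<Rightarrow> real" where
  "beta F x r = (INF \<nu> \<in> {\<nu>. norm \<nu> = 1}. flat_dev F x r \<nu>) / r"

definition Dside :: "pt \<Rightarrow> real \<Rightarrow> pt \<Rightarrow> real \<Rightarrow> real \<Rightarrow> pt set" where
  "Dside x r \<nu> s t = {z \<in> ball x r. s * ((z - x) \<bullet> \<nu>) > t}"

definition separates :: "pt set \<Rightarrow> pt \<Rightarrow> real \<Rightarrow> bool" where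
  "separates F x r \<longleftrightarrow> beta F x r \<le> 1/2 \<and>
     (\<exists>\<nu>. norm \<nu> = 1 \<and> flat_dev F x r \<nu> = beta F x r * r \<and>
        (\<exists>z1 z2. Dside x r \<nu> 1 (beta F x r * r) \<subseteq> connected_component_set (ball x r - F) z1 \<and>
                 Dside x r \<nu> (-1) (beta F x r * r) \<subseteq> connected_component_set (ball x r - F) z2 \<and>
                 connected_component_set (ball x r - F) z1 \<noteq> connected_component_set (ball x r - F) z2))"

definition sep_extension :: "pt set \<Rightarrow> pt \<Rightarrow> real \<Rightarrow> pt set \<Rightarrow> bool" where
  "sep_extension K x0 r0 E \<longleftrightarrow> E \<subseteq> ball x0 r0 \<and> closedin (top_of_set (ball x0 r0)) E \<and>
     coral E \<and> K \<inter> ball x0 r0 \<subseteq> E \<and> beta E x0 r0 = beta K x0 r0 \<and> separates E x0 r0"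

definition min_sep_extension :: "pt set \<Rightarrow> pt \<Rightarrow> real \<Rightarrow> pt set \<Rightarrow> bool" where
  "min_sep_extension K x0 r0 E \<longleftrightarrow> sep_extension K x0 r0 E \<and>
     (\<forall>E'. sep_extension K x0 r0 E' \<longrightarrow> H1 (E - K) \<le> H1 (E' - K))"

definition tau :: real where "tau = 1 / 10^10"

definition good_ball :: "pt set \<Rightarrow> pt set \<Rightarrow> pt \<Rightarrow> real \<Rightarrow> pt \<Rightarrow> real \<Rightarrow> bool" where
  "good_ball K E x0 r0 x t \<longleftrightarrow> x \<in> K \<inter> ball x0 (9*r0/10) \<and> 0 < t \<and> t \<le> r0/10 \<and>
     beta K x t \<le> tau \<and> H1 ((E \<inter> ball x t) - K) \<le> ennreal (tau * t)"

definition sigma :: "pt set \<Rightarrow> pt set \<Rightarrow> pt \<Rightarrow> real \<Rightarrow> pt \<Rightarrow> real" where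
  "sigma K E x0 r0 x = Inf {r. 0 < r \<and> (\<forall>t. r \<le> t \<and> t \<le> r0/10 \<longrightarrow> good_ball K E x0 r0 x t)}"

end

theory Submission
  imports Defs
begin

text \<open>
  Above the stopping time all balls \<open>B(x, s)\<close>, \<open>t \<le> s \<le> r0/10\<close>, are good, which gives the bound
  on \<open>\<beta>_K(x, t)\<close> directly. If \<open>2t \<le> r0/10\<close>, \<open>K\<close> is close to a line \<open>L\<close> in \<open>B(x, 2t)\<close> and
  \<open>E - K\<close> is short there. A point of \<open>E \<inter> B(x, t)\<close> at distance more than \<open>4\<tau>t\<close> from \<open>L\<close> would
  be the centre of a ball of radius \<open>\<rho> > 2\<tau>t\<close> missing \<open>K\<close>, and minimality forces \<open>E\<close> to
  have length at least \<open>\<rho>\<close> in such a ball: otherwise some concentric sphere misses \<open>E\<close>, and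
  deleting the part of \<open>E\<close> inside it leaves a cheaper separating extension, the sphere still
  keeping the two sides apart. If \<open>2t > r0/10\<close>, the flatness of \<open>E\<close> at scale \<open>r0\<close>, equal to
  that of \<open>K\<close>, suffices.
\<close>

section \<open>Bounds for the one-dimensional Hausdorff measure\<close>

lemma H1_delta_mono: "A \<subseteq> B \<Longrightarrow> H1_delta \<delta> A \<le> H1_delta \<delta> B"
  unfolding H1_delta_def by (rule INF_superset_mono) auto

lemma H1_mono: "A \<subseteq> B \<Longrightarrow> H1 A \<le> H1 B"
  unfolding H1_def by (rule SUP_mono) (auto intro: H1_delta_mono)

lemma H1_delta_antimono: "\<delta>1 \<le> \<delta>2 \<Longrightarrow> H1_delta \<delta>2 A \<le> H1_delta \<delta>1 A"
  unfolding H1_delta_def by (rule INF_superset_mono) (auto intro: order_trans)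

lemma H1_delta_le_H1: "\<delta> > 0 \<Longrightarrow> H1_delta \<delta> A \<le> H1 A"
  unfolding H1_def by (rule SUP_upper) auto

lemma lipschitz_image_subset_interval:
  fixes f :: "'a::metric_space \<Rightarrow> real"
  assumes lip: "\<And>p q. \<bar>f p - f q\<bar> \<le> dist p q" and "bounded S" "S \<noteq> {}"
  shows "f ` S \<subseteq> {Inf (f ` S) .. Inf (f ` S) + diameter S}"
proof
  fix v assume "v \<in> f ` S"
  then obtain c where c: "c \<in> S" "v = f c" by auto
  have near: "\<bar>f c - f c'\<bar> \<le> diameter S" if "c' \<in> S" for c'
    using order_trans[OF lip diameter_bounded_bound[OF \<open>bounded S\<close> c(1) that]] .
  have "bdd_below (f ` S)"
    by (rule bdd_belowI2[of _ "f c - diameter S"]) (auto dest: near simp: abs_le_iff)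
  then have "Inf (f ` S) \<le> f c" using c by (simp add: cInf_lower)
  moreover have "f c - diameter S \<le> Inf (f ` S)"
    using \<open>S \<noteq> {}\<close> by (intro cINF_greatest) (auto simp: abs_le_iff dest: near)
  ultimately show "v \<in> {Inf (f ` S) .. Inf (f ` S) + diameter S}" using c by auto
qed

text \<open>Each set of a cover of \<open>A\<close> is mapped by \<open>f\<close> into an interval of the same diameter, and
  these intervals cover \<open>(a, b)\<close>.\<close>

lemma H1_ge_of_lipschitz_image:
  fixes f :: "pt \<Rightarrow> real"
  assumes lip: "\<And>p q. \<bar>f p - f q\<bar> \<le> dist p q" and sub: "{a<..<b} \<subseteq> f ` A" and "a < b"
  shows "ennreal (b - a) \<le> H1 A"
proof -
  have "ennreal (b - a) \<le> H1_delta 1 A"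
    unfolding H1_delta_def
  proof (rule INF_greatest)
    fix C :: "nat \<Rightarrow> pt set" assume "C \<in> {C. A \<subseteq> (\<Union>i. C i) \<and> (\<forall>i. bounded (C i) \<and> diameter (C i) \<le> 1)}"
    then have cov: "A \<subseteq> (\<Union>i. C i)" and bd: "\<And>i. bounded (C i)" by auto
    define J where "J i = (if C i = {} then {} else {Inf (f ` C i) .. Inf (f ` C i) + diameter (C i)})" for i
    have fJ: "f ` C i \<subseteq> J i" for i
      using lipschitz_image_subset_interval[OF lip bd] unfolding J_def by auto
    have "{a<..<b} \<subseteq> (\<Union>i. J i)"
    proof
      fix v assume "v \<in> {a<..<b}"
      then obtain p i where "p \<in> C i" "v = f p" using sub cov by blast
      then show "v \<in> (\<Union>i. J i)" using fJ by blast
    qed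
    then have "emeasure lborel {a<..<b} \<le> emeasure lborel (\<Union>i. J i)"
      by (intro emeasure_mono) (auto simp: J_def)
    also have "\<dots> \<le> (\<Sum>i. emeasure lborel (J i))"
      by (intro emeasure_subadditive_countably) (auto simp: J_def)
    also have "\<dots> \<le> (\<Sum>i. ennreal (diameter (C i)))"
      by (intro suminf_le) (auto simp: J_def diameter_ge_0 bd)
    finally show "ennreal (b - a) \<le> (\<Sum>i. ennreal (diameter (C i)))" using \<open>a < b\<close> by simp
  qed
  also have "\<dots> \<le> H1 A" by (rule H1_delta_le_H1) simp
  finally show ?thesis .
qed

lemma H1_delta_le_finite_cover:
  assumes cover: "A \<subseteq> (\<Union>i<n. C i)" and C: "\<And>i. i < n \<Longrightarrow> bounded (C i) \<and> diameter (C i) \<le> h"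
    and "0 \<le> h" "h \<le> \<delta>"
  shows "H1_delta \<delta> A \<le> ennreal (real n * h)"
proof -
  define C' where "C' i = (if i < n then C i else {})" for i
  have "A \<subseteq> (\<Union>i. C' i)" using cover by (auto simp: C'_def)
  moreover have "bounded (C' i) \<and> diameter (C' i) \<le> \<delta>" for i
    using C[of i] assms(3,4) by (auto simp: C'_def)
  ultimately have "H1_delta \<delta> A \<le> (\<Sum>i. ennreal (diameter (C' i)))"
    unfolding H1_delta_def by (intro INF_lower) auto
  also have "\<dots> = (\<Sum>i<n. ennreal (diameter (C i)))"
    by (subst suminf_finite[where N="{..<n}"]) (auto simp: C'_def)
  also have "\<dots> \<le> (\<Sum>i<n. ennreal h)"
    using C by (intro sum_mono ennreal_leI) auto
  also have "\<dots> = ennreal (real n * h)"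
    using \<open>0 \<le> h\<close> by (simp add: ennreal_of_nat_eq_real_of_nat ennreal_mult)
  finally show ?thesis .
qed

lemma lipschitz_image_interval_diameter:
  fixes g :: "real \<Rightarrow> 'a::real_normed_vector"
  assumes lip: "\<And>s s'. dist (g s) (g s') \<le> \<bar>s - s'\<bar>" and "c \<le> d"
  shows "bounded (g ` {c..d})" "diameter (g ` {c..d}) \<le> d - c"
proof -
  have "dist (g c) (g s) \<le> d - c" if "s \<in> {c..d}" for s
    using lip[of c s] that by auto
  then have "g ` {c..d} \<subseteq> cball (g c) (d - c)" by auto
  then show "bounded (g ` {c..d})" using bounded_subset by blast
  have "norm (g s - g s') \<le> d - c" if "s \<in> {c..d}" "s' \<in> {c..d}" for s s'
    using lip[of s s'] that unfolding dist_norm by (smt (verit) atLeastAtMost_iff)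
  then show "diameter (g ` {c..d}) \<le> d - c"
    using \<open>c \<le> d\<close> by (intro diameter_le) auto
qed

lemma mem_uniform_subinterval:
  fixes n :: nat
  assumes "a \<le> s" "s \<le> b" "n > 0"
  shows "\<exists>i<n. a + real i * ((b - a) / real n) \<le> s \<and> s \<le> a + (real i + 1) * ((b - a) / real n)"
proof (cases "s = b")
  case True
  then show ?thesis using assms
    by (intro exI[of _ "n - 1"]) (auto simp: of_nat_diff field_simps)
next
  case False
  define h where "h = (b - a) / n"
  have "h > 0" using assms False unfolding h_def by simp
  define i where "i = nat \<lfloor>(s - a) / h\<rfloor>"
  have "0 \<le> (s - a) / h" using assms \<open>h > 0\<close> by simp
  then have "real i \<le> (s - a) / h" "(s - a) / h < real i + 1"
    unfolding i_def by linarith+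
  moreover have "(s - a) / h < n"
    using assms False \<open>h > 0\<close> unfolding h_def by (simp add: field_simps)
  then have "i < n" using \<open>real i \<le> (s - a) / h\<close> by linarith
  ultimately show ?thesis
    using \<open>h > 0\<close> unfolding h_def[symmetric]
    by (intro exI[of _ i]) (auto simp: field_simps)
qed

lemma H1_lipschitz_curve_le:
  fixes g :: "real \<Rightarrow> pt"
  assumes lip: "\<And>s s'. dist (g s) (g s') \<le> \<bar>s - s'\<bar>" and "a \<le> b"
  shows "H1 (g ` {a..b}) \<le> ennreal (b - a)"
  unfolding H1_def
proof (rule SUP_least)
  fix \<delta> :: real assume "\<delta> \<in> {0<..}"
  obtain N :: nat where "(b - a) / \<delta> < N" using reals_Archimedean2 by blast
  define n where "n = Suc N"
  have "n > 0" "b - a \<le> n * \<delta>"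
    using \<open>(b - a) / \<delta> < N\<close> \<open>\<delta> \<in> {0<..}\<close> unfolding n_def by (auto simp: field_simps)
  define h where "h = (b - a) / n"
  have h: "0 \<le> h" "h \<le> \<delta>" "real n * h = b - a"
    using \<open>n > 0\<close> \<open>a \<le> b\<close> \<open>b - a \<le> n * \<delta>\<close> unfolding h_def by (auto simp: field_simps)
  have "g ` {a..b} \<subseteq> (\<Union>i<n. g ` {a + real i * h .. a + (real i + 1) * h})"
  proof
    fix z assume "z \<in> g ` {a..b}"
    then obtain s where "s \<in> {a..b}" "z = g s" by blast
    then obtain i where "i < n" "s \<in> {a + real i * h .. a + (real i + 1) * h}"
      using mem_uniform_subinterval[of a s b n] \<open>n > 0\<close> unfolding h_def by auto
    then show "z \<in> (\<Union>i<n. g ` {a + real i * h .. a + (real i + 1) * h})"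
      using \<open>z = g s\<close> by blast
  qed
  moreover have "bounded (g ` {a + real i * h .. a + (real i + 1) * h})"
    "diameter (g ` {a + real i * h .. a + (real i + 1) * h}) \<le> h" for i :: nat
    using lipschitz_image_interval_diameter[OF lip, of "a + real i * h" "a + (real i + 1) * h"] h(1)
    by (simp_all add: algebra_simps)
  ultimately have "H1_delta \<delta> (g ` {a..b}) \<le> ennreal (real n * h)"
    using h by (intro H1_delta_le_finite_cover) auto
  then show "H1_delta \<delta> (g ` {a..b}) \<le> ennreal (b - a)" using h by simp
qed

lemma H1_delta_le_sum_meeting:
  assumes "A \<subseteq> (\<Union>i. C i)" "\<And>i. bounded (C i) \<and> diameter (C i) \<le> \<delta>"
  shows "H1_delta \<delta> A \<le> (\<Sum>i. ennreal (diameter (if C i \<inter> A = {} then {} else C i)))"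
proof -
  let ?C = "\<lambda>i. if C i \<inter> A = {} then {} else C i"
  have "0 \<le> \<delta>" using assms(2)[of 0] diameter_ge_0 by (meson order_trans)
  then have "bounded (?C i) \<and> diameter (?C i) \<le> \<delta>" for i
    using assms(2)[of i] by auto
  moreover have "A \<subseteq> (\<Union>i. ?C i)"
  proof
    fix x assume "x \<in> A"
    then obtain i where "x \<in> C i" using assms(1) by blast
    then show "x \<in> (\<Union>i. ?C i)" using \<open>x \<in> A\<close> by (intro UN_I[of i]) auto
  qed
  ultimately show ?thesis
    unfolding H1_delta_def by (intro INF_lower) auto
qed

lemma H1_delta_add_separated:
  assumes "\<delta> < \<eta>" and sep: "\<And>p q. p \<in> A \<Longrightarrow> q \<in> B \<Longrightarrow> \<eta> \<le> dist p q"
  shows "H1_delta \<delta> A + H1_delta \<delta> B \<le> H1_delta \<delta> (A \<union> B)"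
  unfolding H1_delta_def[of \<delta> "A \<union> B"]
proof (rule INF_greatest)
  fix C :: "nat \<Rightarrow> pt set" assume "C \<in> {C. A \<union> B \<subseteq> (\<Union>i. C i) \<and> (\<forall>i. bounded (C i) \<and> diameter (C i) \<le> \<delta>)}"
  then have cov: "A \<subseteq> (\<Union>i. C i)" "B \<subseteq> (\<Union>i. C i)" and C: "\<And>i. bounded (C i) \<and> diameter (C i) \<le> \<delta>"
    by auto
  let ?d = "\<lambda>S (i::nat). ennreal (diameter (if C i \<inter> S = {} then {} else C i))"
  have no_both: "C i \<inter> A = {} \<or> C i \<inter> B = {}" for i
  proof (rule ccontr)
    assume "\<not> ?thesis"
    then obtain p q where "p \<in> C i \<inter> A" "q \<in> C i \<inter> B" by blast
    then have "\<eta> \<le> diameter (C i)" using sep C diameter_bounded_bound by (meson IntD1 IntD2 order_trans)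
    then show False using C \<open>\<delta> < \<eta>\<close> by (meson leD order_le_less_trans)
  qed
  have "H1_delta \<delta> A + H1_delta \<delta> B \<le> (\<Sum>i. ?d A i) + (\<Sum>i. ?d B i)"
    using cov C by (intro add_mono H1_delta_le_sum_meeting)
  also have "\<dots> = (\<Sum>i. ?d A i + ?d B i)"
    by (intro suminf_add summableI)
  also have "\<dots> \<le> (\<Sum>i. ennreal (diameter (C i)))"
    using no_both by (intro suminf_le summableI) auto
  finally show "H1_delta \<delta> A + H1_delta \<delta> B \<le> (\<Sum>i. ennreal (diameter (C i)))" .
qed

lemma H1_add_separated:
  assumes "\<eta> > 0" and sep: "\<And>p q. p \<in> A \<Longrightarrow> q \<in> B \<Longrightarrow> \<eta> \<le> dist p q"
  shows "H1 A + H1 B \<le> H1 (A \<union> B)"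
proof -
  have both: "H1_delta d1 A + H1_delta d2 B \<le> H1 (A \<union> B)" if "d1 > 0" "d2 > 0" for d1 d2
  proof -
    define m where "m = min (min d1 d2) (\<eta> / 2)"
    have m: "m > 0" "m \<le> d1" "m \<le> d2" "m < \<eta>" using that \<open>\<eta> > 0\<close> unfolding m_def by auto
    have "H1_delta d1 A + H1_delta d2 B \<le> H1_delta m A + H1_delta m B"
      using m by (intro add_mono H1_delta_antimono)
    also have "\<dots> \<le> H1_delta m (A \<union> B)" using m sep by (intro H1_delta_add_separated)
    also have "\<dots> \<le> H1 (A \<union> B)" using m by (intro H1_delta_le_H1)
    finally show ?thesis .
  qed
  have "H1 A + H1 B = (SUP d1\<in>{0<..}. H1_delta d1 A + H1 B)"
    unfolding H1_def[of A] by (subst ennreal_SUP_add_left) auto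
  also have "\<dots> = (SUP d1\<in>{0<..}. SUP d2\<in>{0<..}. H1_delta d1 A + H1_delta d2 B)"
    unfolding H1_def[of B] by (subst ennreal_SUP_add_right) auto
  also have "\<dots> \<le> H1 (A \<union> B)" using both by (intro SUP_least) auto
  finally show ?thesis .
qed

lemma exists_sphere_avoiding:
  assumes "H1 (A \<inter> ball y \<rho>) < ennreal \<rho>"
  obtains r where "0 < r" "r < \<rho>" "A \<inter> sphere y r = {}"
proof -
  have "\<rho> > 0" using assms by (metis ennreal_eq_0_iff not_less not_less_zero)
  have "\<not> {0<..<\<rho>} \<subseteq> dist y ` (A \<inter> ball y \<rho>)"
  proof
    assume "{0<..<\<rho>} \<subseteq> dist y ` (A \<inter> ball y \<rho>)"
    then have "ennreal (\<rho> - 0) \<le> H1 (A \<inter> ball y \<rho>)"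
      using \<open>\<rho> > 0\<close> by (intro H1_ge_of_lipschitz_image[of "dist y"]) (metis abs_dist_diff_le dist_commute)
    then show False using assms by simp
  qed
  then obtain r where "r \<in> {0<..<\<rho>}" "r \<notin> dist y ` (A \<inter> ball y \<rho>)" by blast
  then show thesis using that[of r] by force
qed


lemma H1_add_inside_outside_sphere:
  assumes "closed T" "T \<inter> sphere y r = {}" "A \<subseteq> T - ball y r" "B \<subseteq> T \<inter> ball y r"
  shows "H1 A + H1 B \<le> H1 (A \<union> B)"
proof -
  have "T \<inter> ball y r = T \<inter> cball y r" using assms(2) by auto
  then have "compact (T \<inter> ball y r)" using \<open>closed T\<close> by (simp add: closed_Int_compact)
  moreover have "closed (T - ball y r)" using \<open>closed T\<close> by (simp add: closed_Diff)
  ultimately obtain \<eta> where "\<eta> > 0" and \<eta>: "\<forall>q\<in>T \<inter> ball y r. \<forall>p\<in>T - ball y r. \<eta> \<le> dist q p"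
    using separate_compact_closed[of "T \<inter> ball y r" "T - ball y r"] by blast
  then show ?thesis
  proof (intro H1_add_separated[of \<eta>])
    fix p q assume "p \<in> A" "q \<in> B"
    then have "\<eta> \<le> dist q p" using \<eta> assms(3,4) by blast
    then show "\<eta> \<le> dist p q" by (simp add: dist_commute)
  qed
qed

section \<open>Lines, flatness and \<open>\<beta>\<close>-numbers\<close>

lemma line_normal_self: "x \<in> line_normal x \<nu>"
  unfolding line_normal_def by simp

lemma infdist_line_normal:
  assumes "norm \<nu> = 1"
  shows "infdist z (line_normal x \<nu>) = \<bar>(z - x) \<bullet> \<nu>\<bar>"
proof (rule antisym)
  define p where "p = z - ((z - x) \<bullet> \<nu>) *\<^sub>R \<nu>"
  have "\<nu> \<bullet> \<nu> = 1" using assms by (simp add: dot_square_norm)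
  then have "p \<in> line_normal x \<nu>"
    unfolding p_def line_normal_def by (simp add: inner_diff_left algebra_simps)
  then have "infdist z (line_normal x \<nu>) \<le> dist z p" by (rule infdist_le)
  also have "\<dots> = \<bar>(z - x) \<bullet> \<nu>\<bar>" unfolding p_def dist_norm using assms by simp
  finally show "infdist z (line_normal x \<nu>) \<le> \<bar>(z - x) \<bullet> \<nu>\<bar>" .
next
  have "\<bar>(z - x) \<bullet> \<nu>\<bar> \<le> dist z q" if "q \<in> line_normal x \<nu>" for q
  proof -
    have "(z - x) \<bullet> \<nu> = (z - q) \<bullet> \<nu>"
      using that unfolding line_normal_def by (simp add: inner_diff_left)
    also have "\<bar>\<dots>\<bar> \<le> norm (z - q) * norm \<nu>" by (rule Cauchy_Schwarz_ineq2)
    finally show ?thesis using assms by (simp add: dist_norm)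
  qed
  then show "\<bar>(z - x) \<bullet> \<nu>\<bar> \<le> infdist z (line_normal x \<nu>)"
    unfolding infdist_def using line_normal_self by (auto intro: cINF_greatest)
qed

lemma bdd_above_flat_dev: "bdd_above ((\<lambda>y. infdist y (line_normal x \<nu>)) ` (F \<inter> ball x r))"
proof (rule bdd_aboveI2)
  fix y assume "y \<in> F \<inter> ball x r"
  then show "infdist y (line_normal x \<nu>) \<le> r"
    using infdist_le[OF line_normal_self, of y x \<nu>] by (simp add: dist_commute)
qed

lemma infdist_le_flat_dev: "y \<in> F \<inter> ball x r \<Longrightarrow> infdist y (line_normal x \<nu>) \<le> flat_dev F x r \<nu>"
  unfolding flat_dev_def using bdd_above_flat_dev by (rule cSUP_upper2) auto

lemma flat_dev_least:
  "F \<inter> ball x r \<noteq> {} \<Longrightarrow> (\<And>y. y \<in> F \<inter> ball x r \<Longrightarrow> infdist y (line_normal x \<nu>) \<le> c)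
    \<Longrightarrow> flat_dev F x r \<nu> \<le> c"
  unfolding flat_dev_def by (rule cSUP_least) auto

lemma flat_dev_nonneg: "F \<inter> ball x r \<noteq> {} \<Longrightarrow> 0 \<le> flat_dev F x r \<nu>"
  using infdist_le_flat_dev infdist_nonneg by (meson all_not_in_conv order_trans)

lemma flat_dev_mono:
  "F \<inter> ball x r \<noteq> {} \<Longrightarrow> F \<inter> ball x r \<subseteq> G \<Longrightarrow> flat_dev F x r \<nu> \<le> flat_dev G x r \<nu>"
proof (rule flat_dev_least)
  fix y assume "F \<inter> ball x r \<subseteq> G" "y \<in> F \<inter> ball x r"
  then show "infdist y (line_normal x \<nu>) \<le> flat_dev G x r \<nu>" by (intro infdist_le_flat_dev) auto
qed

lemma abs_inner_le_flat_dev: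
  "norm \<nu> = 1 \<Longrightarrow> p \<in> F \<inter> ball x r \<Longrightarrow> \<bar>(p - x) \<bullet> \<nu>\<bar> \<le> flat_dev F x r \<nu>"
  using infdist_le_flat_dev infdist_line_normal by metis

lemma flat_dev_le_slab:
  assumes "norm \<nu> = 1" "F \<inter> ball x r \<noteq> {}" "\<And>p. p \<in> F \<inter> ball x r \<Longrightarrow> \<bar>(p - x) \<bullet> \<nu>\<bar> \<le> c"
  shows "flat_dev F x r \<nu> \<le> c"
  using assms by (intro flat_dev_least) (auto simp: infdist_line_normal)

lemma unit_vectors_nonempty: "{\<nu> :: pt. norm \<nu> = 1} \<noteq> {}"
  using norm_axis_1[where 'a=2] by blast

lemma bdd_below_flat_dev: "F \<inter> ball x r \<noteq> {} \<Longrightarrow> bdd_below ((\<lambda>\<nu>. flat_dev F x r \<nu>) ` U)"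
  by (rule bdd_belowI2[of _ 0]) (rule flat_dev_nonneg)

lemma beta_le_flat_dev:
  assumes "F \<inter> ball x r \<noteq> {}" "r > 0" "norm \<nu> = 1"
  shows "beta F x r * r \<le> flat_dev F x r \<nu>"
proof -
  have "(INF \<nu>\<in>{\<nu>. norm \<nu> = 1}. flat_dev F x r \<nu>) \<le> flat_dev F x r \<nu>"
    using assms by (intro cINF_lower bdd_below_flat_dev) auto
  then show ?thesis using \<open>r > 0\<close> unfolding beta_def by simp
qed

lemma exists_flat_dev_less:
  assumes "F \<inter> ball x r \<noteq> {}" "r > 0" "beta F x r * r < c"
  shows "\<exists>\<nu>. norm \<nu> = 1 \<and> flat_dev F x r \<nu> < c"
  using assms cINF_less_iff[OF unit_vectors_nonempty bdd_below_flat_dev, of F x r c]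
  unfolding beta_def by auto

lemma beta_ge:
  assumes "F \<inter> ball x r \<noteq> {}" "r > 0" "\<And>\<nu>. norm \<nu> = 1 \<Longrightarrow> c \<le> flat_dev F x r \<nu>"
  shows "c \<le> beta F x r * r"
proof -
  have "c \<le> (INF \<nu>\<in>{\<nu>. norm \<nu> = 1}. flat_dev F x r \<nu>)"
    using assms unit_vectors_nonempty by (intro cINF_greatest) auto
  then show ?thesis using \<open>r > 0\<close> unfolding beta_def by simp
qed

lemma beta_nonneg: "F \<inter> ball x r \<noteq> {} \<Longrightarrow> r > 0 \<Longrightarrow> 0 \<le> beta F x r"
  using beta_ge[of F x r 0] flat_dev_nonneg by (simp add: zero_le_mult_iff)

lemma beta_mono:
  assumes "F \<inter> ball x r \<noteq> {}" "F \<inter> ball x r \<subseteq> G" "r > 0"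
  shows "beta F x r \<le> beta G x r"
proof -
  have "beta F x r * r \<le> beta G x r * r"
  proof (rule beta_ge)
    fix \<nu> :: pt assume "norm \<nu> = 1"
    then have "beta F x r * r \<le> flat_dev F x r \<nu>" using assms by (intro beta_le_flat_dev)
    also have "\<dots> \<le> flat_dev G x r \<nu>" using assms by (intro flat_dev_mono)
    finally show "beta F x r * r \<le> flat_dev G x r \<nu>" .
  qed (use assms in auto)
  then show ?thesis using \<open>r > 0\<close> by simp
qed

lemma beta_le_slab:
  assumes "norm \<nu> = 1" "x \<in> F" "r > 0" "\<And>p. p \<in> F \<inter> ball x r \<Longrightarrow> \<bar>(p - x) \<bullet> \<nu>\<bar> \<le> c"
  shows "beta F x r \<le> c / r"
proof -
  have "F \<inter> ball x r \<noteq> {}" using assms(2,3) by auto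
  then have "beta F x r * r \<le> c"
    using assms flat_dev_le_slab beta_le_flat_dev order_trans by metis
  then show ?thesis using \<open>r > 0\<close> by (simp add: field_simps)
qed

definition perp :: "pt \<Rightarrow> pt" where
  "perp \<nu> = (\<chi> i. if i = 1 then - (\<nu> $ 2) else \<nu> $ 1)"

lemma perp_inner: "perp \<nu> \<bullet> \<nu> = 0"
  unfolding perp_def inner_vec_def by (simp add: sum_2)

lemma norm_perp: "norm (perp \<nu>) = norm \<nu>"
proof -
  have "perp \<nu> \<bullet> perp \<nu> = \<nu> \<bullet> \<nu>" unfolding perp_def inner_vec_def by (simp add: sum_2)
  then show ?thesis by (metis norm_eq_sqrt_inner)
qed

lemma perp_decomp:
  assumes "norm \<nu> = 1"
  shows "z = (z \<bullet> \<nu>) *\<^sub>R \<nu> + (z \<bullet> perp \<nu>) *\<^sub>R perp \<nu>"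
proof -
  have unit: "\<nu>$1 * \<nu>$1 + \<nu>$2 * \<nu>$2 = 1"
    using assms by (metis dot_square_norm inner_vec_def sum_2 inner_real_def power_one)
  have "(z$1 * \<nu>$1 + z$2 * \<nu>$2) * \<nu>$1 + (- (z$1 * \<nu>$2) + z$2 * \<nu>$1) * - \<nu>$2
      = z$1 * (\<nu>$1 * \<nu>$1 + \<nu>$2 * \<nu>$2)"
    "(z$1 * \<nu>$1 + z$2 * \<nu>$2) * \<nu>$2 + (- (z$1 * \<nu>$2) + z$2 * \<nu>$1) * \<nu>$1
      = z$2 * (\<nu>$1 * \<nu>$1 + \<nu>$2 * \<nu>$2)"
    by (simp_all add: algebra_simps)
  then show ?thesis
    unfolding perp_def inner_vec_def vec_eq_iff forall_2 using unit by (simp add: sum_2 algebra_simps)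
qed

lemma H1_line_normal_ball_le:
  assumes "norm \<nu> = 1" "r > 0"
  shows "H1 (line_normal x \<nu> \<inter> ball x r) \<le> ennreal (2 * r)"
proof -
  define g where "g s = x + s *\<^sub>R perp \<nu>" for s
  have "norm (perp \<nu>) = 1" using assms norm_perp by simp
  then have lip: "dist (g s) (g s') \<le> \<bar>s - s'\<bar>" for s s'
    unfolding g_def dist_norm by (simp add: scaleR_diff_left[symmetric])
  have "line_normal x \<nu> \<inter> ball x r \<subseteq> g ` {-r..r}"
  proof
    fix p assume p: "p \<in> line_normal x \<nu> \<inter> ball x r"
    then have "p - x = ((p - x) \<bullet> perp \<nu>) *\<^sub>R perp \<nu>"
      using perp_decomp[OF assms(1), of "p - x"] unfolding line_normal_def by simp
    then have "p = g ((p - x) \<bullet> perp \<nu>)" unfolding g_def by (metis add.commute diff_add_cancel)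
    moreover have "\<bar>(p - x) \<bullet> perp \<nu>\<bar> \<le> r"
      using Cauchy_Schwarz_ineq2[of "p - x" "perp \<nu>"] p \<open>norm (perp \<nu>) = 1\<close>
      by (simp add: dist_norm norm_minus_commute)
    ultimately show "p \<in> g ` {-r..r}" by (auto simp: abs_le_iff)
  qed
  then have "H1 (line_normal x \<nu> \<inter> ball x r) \<le> H1 (g ` {-r..r})" by (rule H1_mono)
  also have "\<dots> \<le> ennreal (r - - r)" using lip assms by (intro H1_lipschitz_curve_le) auto
  finally show ?thesis by simp
qed

lemma H1_line_normal_ball_ge:
  assumes "norm \<nu> = 1" "s > 0" "z \<in> line_normal x \<nu>"
  shows "ennreal s \<le> H1 (line_normal x \<nu> \<inter> ball z s)"
proof -
  define f where "f p = (p - z) \<bullet> perp \<nu>" for p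
  have unit: "norm (perp \<nu>) = 1" using assms norm_perp by simp
  have "\<bar>f p - f q\<bar> \<le> dist p q" for p q
    using Cauchy_Schwarz_ineq2[of "p - q" "perp \<nu>"] unit
    unfolding f_def by (simp add: inner_diff_left dist_norm)
  moreover have "{0<..<s} \<subseteq> f ` (line_normal x \<nu> \<inter> ball z s)"
  proof
    fix a assume a: "a \<in> {0<..<s}"
    define p where "p = z + a *\<^sub>R perp \<nu>"
    have "p \<in> line_normal x \<nu>"
      using assms(3) unfolding p_def line_normal_def by (simp add: inner_add_left perp_inner algebra_simps)
    moreover have "p \<in> ball z s" unfolding p_def using a unit by (simp add: dist_norm)
    moreover have "f p = a" unfolding f_def p_def using unit by (simp add: dot_square_norm)
    ultimately show "a \<in> f ` (line_normal x \<nu> \<inter> ball z s)" by force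
  qed
  ultimately show ?thesis using H1_ge_of_lipschitz_image[of f 0 s] \<open>s > 0\<close> by simp
qed

lemma coral_Int_open:
  assumes "coral K" "open U"
  shows "coral (K \<inter> U)"
  unfolding coral_def
proof (intro ballI allI impI)
  fix z and r :: real assume "z \<in> K \<inter> U" "r > 0"
  then obtain s where "s > 0" "ball z s \<subseteq> U" using \<open>open U\<close> open_contains_ball by blast
  have "0 < H1 (K \<inter> ball z (min r s))"
    using \<open>coral K\<close> \<open>z \<in> K \<inter> U\<close> \<open>r > 0\<close> \<open>s > 0\<close> unfolding coral_def by simp
  also have "\<dots> \<le> H1 (K \<inter> U \<inter> ball z r)"
    using \<open>ball z s \<subseteq> U\<close> by (intro H1_mono) auto
  finally show "0 < H1 (K \<inter> U \<inter> ball z r)" .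
qed

lemma coral_Un:
  assumes "coral A" "coral B"
  shows "coral (A \<union> B)"
  unfolding coral_def
proof (intro ballI allI impI)
  fix z and r :: real assume "z \<in> A \<union> B" "r > 0"
  then have "0 < H1 (A \<inter> ball z r) \<or> 0 < H1 (B \<inter> ball z r)"
    using assms unfolding coral_def by blast
  moreover have "H1 (A \<inter> ball z r) \<le> H1 ((A \<union> B) \<inter> ball z r)"
    "H1 (B \<inter> ball z r) \<le> H1 ((A \<union> B) \<inter> ball z r)" by (auto intro: H1_mono)
  ultimately show "0 < H1 ((A \<union> B) \<inter> ball z r)" by (meson order_less_le_trans)
qed

lemma coral_line_normal:
  assumes "norm \<nu> = 1"
  shows "coral (line_normal x \<nu>)"
  unfolding coral_def
proof (intro ballI allI impI)
  fix z and r :: real assume "z \<in> line_normal x \<nu>" "r > 0"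
  then have "ennreal r \<le> H1 (line_normal x \<nu> \<inter> ball z r)"
    using assms by (intro H1_line_normal_ball_ge)
  then show "0 < H1 (line_normal x \<nu> \<inter> ball z r)"
    using \<open>r > 0\<close> by (meson ennreal_less_zero_iff order_less_le_trans)
qed


section \<open>Half-balls and components of complements\<close>

lemma convex_Dside: "convex (Dside x r \<nu> s b)"
proof -
  have "Dside x r \<nu> s b = ball x r \<inter> {z. inner (s *\<^sub>R \<nu>) z > b + s * inner \<nu> x}"
    unfolding Dside_def by (auto simp: inner_diff_left inner_commute[of _ \<nu>] algebra_simps)
  then show ?thesis using convex_Int[OF convex_ball convex_halfspace_gt] by metis
qed

lemma Dside_uminus: "Dside x r \<nu> (-1) b = Dside x r (-\<nu>) 1 b"
  unfolding Dside_def by simp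

lemma separatesE:
  assumes "separates F x r"
  obtains \<nu> z1 z2 where "norm \<nu> = 1" "flat_dev F x r \<nu> = beta F x r * r" "beta F x r \<le> 1/2"
    "Dside x r \<nu> 1 (beta F x r * r) \<subseteq> connected_component_set (ball x r - F) z1"
    "Dside x r (- \<nu>) 1 (beta F x r * r) \<subseteq> connected_component_set (ball x r - F) z2"
    "connected_component_set (ball x r - F) z1 \<noteq> connected_component_set (ball x r - F) z2"
  using assms unfolding separates_def Dside_uminus by blast

lemma separatesI:
  assumes "norm \<nu> = 1" "flat_dev F x r \<nu> = beta F x r * r" "beta F x r \<le> 1/2"
    "Dside x r \<nu> 1 (beta F x r * r) \<subseteq> connected_component_set (ball x r - F) z1"
    "Dside x r (- \<nu>) 1 (beta F x r * r) \<subseteq> connected_component_set (ball x r - F) z2"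
    "connected_component_set (ball x r - F) z1 \<noteq> connected_component_set (ball x r - F) z2"
  shows "separates F x r"
  using assms unfolding separates_def Dside_uminus by blast

lemma Dside_mem:
  assumes "norm \<nu> = 1" "r > 0" "b < c * r" "0 \<le> c" "c < 1"
  shows "x + (c * r) *\<^sub>R \<nu> \<in> Dside x r \<nu> 1 b"
  using assms unfolding Dside_def by (simp add: dist_norm dot_square_norm)

lemma Dside_point_outside_cball:
  assumes "norm \<nu> = 1" "r > 0" "b \<le> r / 2" "\<rho> < r / 10"
  obtains w where "w \<in> Dside x r \<nu> 1 b" "w \<notin> cball y \<rho>"
proof -
  define a1 where "a1 = x + (6/10 * r) *\<^sub>R \<nu>"
  define a2 where "a2 = x + (9/10 * r) *\<^sub>R \<nu>"
  have "a1 \<in> Dside x r \<nu> 1 b" "a2 \<in> Dside x r \<nu> 1 b"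
    unfolding a1_def a2_def using assms by (intro Dside_mem; simp)+
  moreover have "dist a1 a2 = 3/10 * r"
    unfolding a1_def a2_def dist_norm using assms by (simp add: scaleR_diff_left[symmetric])
  then have "a1 \<notin> cball y \<rho> \<or> a2 \<notin> cball y \<rho>"
    using assms dist_triangle[of a1 a2 y] by (auto simp: dist_commute)
  ultimately show thesis using that by blast
qed

lemma sphere_subset_crossing_component:
  fixes W :: "'a::euclidean_space set"
  assumes "2 \<le> DIM('a)" "sphere y r \<subseteq> W"
    and meets: "connected_component_set W w \<inter> ball y r \<noteq> {}" and "w \<notin> ball y r"
  shows "sphere y r \<subseteq> connected_component_set W w"
proof -
  have "r > 0" using meets by (metis ball_eq_empty inf_bot_right not_less)
  have "w \<in> W" using meets by (metis connected_component_eq_empty inf_bot_left)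
  then have "w \<in> connected_component_set W w" by simp
  then have "connected_component_set W w \<inter> frontier (ball y r) \<noteq> {}"
    using connected_Int_frontier[OF connected_connected_component meets] \<open>w \<notin> ball y r\<close> by blast
  then obtain s where s: "s \<in> sphere y r" "s \<in> connected_component_set W w"
    using frontier_ball[OF \<open>r > 0\<close>] by blast
  have "sphere y r \<subseteq> connected_component_set W s"
    using s(1) connected_sphere[OF assms(1)] assms(2) by (rule connected_component_maximal)
  then show ?thesis using s(2) connected_component_eq by metis
qed

lemma component_misses_ball:
  fixes W :: "'a::euclidean_space set"
  assumes dim: "2 \<le> DIM('a)" and "sphere y r \<subseteq> W" "sphere y r \<subseteq> P"
    and "connected_component_set W q \<inter> P = {}" "q \<notin> ball y r"
  shows "connected_component_set W q \<inter> ball y r = {}"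
proof (rule ccontr)
  assume meets: "connected_component_set W q \<inter> ball y r \<noteq> {}"
  then have "r > 0" by (metis ball_eq_empty inf_bot_right not_less)
  have "sphere y r \<subseteq> connected_component_set W q"
    using sphere_subset_crossing_component[OF dim \<open>sphere y r \<subseteq> W\<close> meets \<open>q \<notin> ball y r\<close>] .
  then have "sphere y r = {}" using assms(3,4) by blast
  then show False using \<open>r > 0\<close> by simp
qed

text \<open>Adding to \<open>W\<close> points of a ball whose bounding sphere lies in \<open>W\<close> does not join two
  components of \<open>W\<close> reaching outside the ball: the component \<open>P\<close> of \<open>w1\<close>, together with the
  ball when \<open>P\<close> contains the sphere, is open and closed in \<open>U\<close>.\<close>

lemma connected_component_fill_ball:
  fixes W U :: "'a::euclidean_space set"
  assumes dim: "2 \<le> DIM('a)" and "open W" "W \<subseteq> U" "U - W \<subseteq> ball y r" "sphere y r \<subseteq> W"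
    and w: "w1 \<in> W" "w2 \<in> W" "w1 \<notin> ball y r" "w2 \<notin> ball y r"
    and ne: "connected_component_set W w1 \<noteq> connected_component_set W w2"
  shows "connected_component_set U w1 \<noteq> connected_component_set U w2"
proof
  assume eq: "connected_component_set U w1 = connected_component_set U w2"
  define P where "P = connected_component_set W w1"
  define Ps where "Ps = P \<union> (if sphere y r \<subseteq> P then ball y r else {})"
  have "open Ps" unfolding Ps_def P_def using \<open>open W\<close> by (auto intro: open_connected_component)
  have outside: "q \<in> interior (- Ps)" if "q \<in> U" "q \<notin> Ps" for q
  proof (cases "q \<in> W")
    case True
    define Q where "Q = connected_component_set W q"
    have "q \<in> Q" "open Q" unfolding Q_def using True \<open>open W\<close> by (auto intro: open_connected_component)
    have QP: "Q \<inter> P = {}" using \<open>q \<notin> Ps\<close> unfolding Q_def P_def Ps_def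
      by (auto simp: connected_component_disjoint connected_component_sym)
    have "Q \<inter> ball y r = {}" if "sphere y r \<subseteq> P"
      using component_misses_ball[OF dim \<open>sphere y r \<subseteq> W\<close> that] QP \<open>q \<notin> Ps\<close> that
      unfolding Q_def Ps_def by simp
    then have "Q \<inter> Ps = {}" using QP unfolding Ps_def by auto
    then show ?thesis using \<open>q \<in> Q\<close> \<open>open Q\<close> by (intro interiorI[of Q]) auto
  next
    case False
    then have "q \<in> ball y r" using that \<open>U - W \<subseteq> ball y r\<close> by blast
    then have "\<not> sphere y r \<subseteq> P" using \<open>q \<notin> Ps\<close> unfolding Ps_def by auto
    then have "P \<inter> ball y r = {}"
      using sphere_subset_crossing_component[OF dim \<open>sphere y r \<subseteq> W\<close> _ w(3)] unfolding P_def by blast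
    then have "ball y r \<subseteq> - Ps" using \<open>\<not> sphere y r \<subseteq> P\<close> unfolding Ps_def by auto
    then show ?thesis using \<open>q \<in> ball y r\<close> by (intro interiorI[of "ball y r"]) auto
  qed
  define T where "T = connected_component_set U w1"
  have "T \<subseteq> U" unfolding T_def by (rule connected_component_subset)
  then have "T \<subseteq> Ps \<union> interior (- Ps)" using outside by blast
  moreover have "w1 \<in> Ps" "w1 \<in> T" using w \<open>W \<subseteq> U\<close> unfolding T_def Ps_def P_def by auto
  then have "Ps \<inter> T \<noteq> {}" by blast
  ultimately have "interior (- Ps) \<inter> T = {}"
    using connectedD[of T Ps "interior (- Ps)"] \<open>open Ps\<close> interior_subset[of "- Ps"]
    unfolding T_def by auto
  moreover have "w2 \<in> T" unfolding T_def eq using w(2) \<open>W \<subseteq> U\<close> by auto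
  ultimately have "w2 \<in> P" using \<open>T \<subseteq> Ps \<union> interior (- Ps)\<close> w(4) unfolding Ps_def by (auto split: if_splits)
  then show False using ne connected_component_eq unfolding P_def by metis
qed


section \<open>Separating extensions\<close>

lemma flat_dev_attains_beta:
  assumes "x \<in> K" "r > 0" "norm \<nu> = 1" "K \<inter> ball x r \<subseteq> F"
    and le: "flat_dev F x r \<nu> \<le> beta K x r * r"
  shows "beta F x r = beta K x r" "flat_dev F x r \<nu> = beta F x r * r"
proof -
  have "x \<in> K \<inter> ball x r" using assms by simp
  then have ne: "K \<inter> ball x r \<noteq> {}" "F \<inter> ball x r \<noteq> {}" using assms(4) by blast+
  then have "beta K x r \<le> beta F x r"
    using assms by (intro beta_mono) auto
  moreover have "beta F x r * r \<le> flat_dev F x r \<nu>"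
    using ne assms by (intro beta_le_flat_dev)
  then have "beta F x r \<le> beta K x r"
    using le \<open>r > 0\<close> by (meson mult_le_cancel_right_pos order_trans)
  ultimately show "beta F x r = beta K x r" "flat_dev F x r \<nu> = beta F x r * r"
    using le \<open>beta F x r * r \<le> flat_dev F x r \<nu>\<close> by auto
qed

lemma flat_dev_uminus: "flat_dev F x r (- \<nu>) = flat_dev F x r \<nu>"
  unfolding flat_dev_def line_normal_def by (simp add: inner_minus_right)

lemma Dside_subset_component:
  assumes "norm \<nu> = 1" "flat_dev F x r \<nu> \<le> b" "z \<in> Dside x r \<nu> 1 b"
  shows "Dside x r \<nu> 1 b \<subseteq> connected_component_set (ball x r - F) z"
proof (rule connected_component_maximal[OF assms(3) convex_connected[OF convex_Dside]])
  show "Dside x r \<nu> 1 b \<subseteq> ball x r - F"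
    using abs_inner_le_flat_dev[OF assms(1)] assms(2) unfolding Dside_def by force
qed

lemma separates_if_contains_line:
  assumes "norm \<nu> = 1" "r > 0" "line_normal x \<nu> \<inter> ball x r \<subseteq> F"
    and fd: "flat_dev F x r \<nu> = beta F x r * r" and "beta F x r \<le> 1/2"
  shows "separates F x r"
proof -
  define b where "b = beta F x r * r"
  have "b \<le> r / 2" unfolding b_def using \<open>beta F x r \<le> 1/2\<close> \<open>r > 0\<close> by (simp add: field_simps)
  define z1 where "z1 = x + (3/4 * r) *\<^sub>R \<nu>"
  define z2 where "z2 = x + (3/4 * r) *\<^sub>R - \<nu>"
  have z: "z1 \<in> Dside x r \<nu> 1 b" "z2 \<in> Dside x r (- \<nu>) 1 b"
    unfolding z1_def z2_def using assms \<open>b \<le> r / 2\<close> by (intro Dside_mem; simp)+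
  have D1: "Dside x r \<nu> 1 b \<subseteq> connected_component_set (ball x r - F) z1"
    using assms(1) fd z(1) unfolding b_def by (intro Dside_subset_component) auto
  have D2: "Dside x r (- \<nu>) 1 b \<subseteq> connected_component_set (ball x r - F) z2"
    using assms(1) fd z(2) unfolding b_def
    by (intro Dside_subset_component) (auto simp: flat_dev_uminus)
  have "connected_component_set (ball x r - F) z1 \<noteq> connected_component_set (ball x r - F) z2"
  proof
    let ?T = "connected_component_set (ball x r - F) z1"
    assume "?T = connected_component_set (ball x r - F) z2"
    then have "z1 \<in> ?T" "z2 \<in> ?T" using D1 D2 z by auto
    moreover have "inner \<nu> z2 \<le> inner \<nu> x" "inner \<nu> x \<le> inner \<nu> z1"
      unfolding z1_def z2_def using assms by (simp_all add: inner_add_right inner_diff_right dot_square_norm)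
    ultimately obtain p where "p \<in> ?T" "inner \<nu> p = inner \<nu> x"
      using connected_ivt_hyperplane[of ?T z2 z1 \<nu> "inner \<nu> x"] by auto
    then have "p \<in> ball x r - F" "p \<in> line_normal x \<nu>"
      using connected_component_subset[of "ball x r - F" z1]
      by (auto simp: line_normal_def inner_diff_left inner_diff_right inner_commute)
    then show False using assms(3) by blast
  qed
  then show ?thesis using separatesI[OF assms(1) fd assms(5)] D1 D2 unfolding b_def by blast
qed

lemma sep_extension_Un_line:
  assumes "x0 \<in> K" "r0 > 0" "coral K" "closedin (top_of_set (ball x0 r0)) (K \<inter> ball x0 r0)"
    and \<nu>: "norm \<nu> = 1" "flat_dev K x0 r0 \<nu> = beta K x0 r0 * r0" "beta K x0 r0 \<le> 1/2"
  shows "sep_extension K x0 r0 ((K \<union> line_normal x0 \<nu>) \<inter> ball x0 r0)"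
proof -
  let ?F = "(K \<union> line_normal x0 \<nu>) \<inter> ball x0 r0"
  have "0 \<le> beta K x0 r0" using assms by (intro beta_nonneg) auto
  have "\<bar>(p - x0) \<bullet> \<nu>\<bar> \<le> beta K x0 r0 * r0" if "p \<in> ?F" for p
  proof (cases "p \<in> K")
    case True
    then show ?thesis using abs_inner_le_flat_dev[OF \<nu>(1), of p K x0 r0] \<nu>(2) that by auto
  next
    case False
    then have "(p - x0) \<bullet> \<nu> = 0" using that unfolding line_normal_def by auto
    then show ?thesis using \<open>0 \<le> beta K x0 r0\<close> \<open>r0 > 0\<close> by simp
  qed
  then have "flat_dev ?F x0 r0 \<nu> \<le> beta K x0 r0 * r0"
    using assms by (intro flat_dev_le_slab) auto
  then have \<beta>: "beta ?F x0 r0 = beta K x0 r0" "flat_dev ?F x0 r0 \<nu> = beta ?F x0 r0 * r0"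
    using assms by (intro flat_dev_attains_beta; auto)+
  have "line_normal x0 \<nu> = {y. \<nu> \<bullet> y = \<nu> \<bullet> x0}"
    unfolding line_normal_def by (auto simp: inner_diff_left inner_diff_right inner_commute)
  then have "closedin (top_of_set (ball x0 r0)) (ball x0 r0 \<inter> line_normal x0 \<nu>)"
    by (simp add: closedin_closed_Int closed_hyperplane)
  moreover have "?F = (K \<inter> ball x0 r0) \<union> (ball x0 r0 \<inter> line_normal x0 \<nu>)" by blast
  ultimately have "closedin (top_of_set (ball x0 r0)) ?F" using assms(4) by (metis closedin_Un)
  moreover have "coral ?F"
    using assms by (intro coral_Int_open coral_Un coral_line_normal) auto
  moreover have "separates ?F x0 r0"
    using \<beta> \<nu> \<open>r0 > 0\<close> by (intro separates_if_contains_line) auto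
  moreover have "?F \<subseteq> ball x0 r0" "K \<inter> ball x0 r0 \<subseteq> ?F" by auto
  ultimately show ?thesis unfolding sep_extension_def using \<beta>(1) by blast
qed

lemma min_sep_extension_H1_finite:
  assumes "min_sep_extension K x0 r0 E" "x0 \<in> K" "r0 > 0" "coral K"
    and "closedin (top_of_set (ball x0 r0)) (K \<inter> ball x0 r0)"
  shows "H1 (E - K) < \<infinity>"
proof -
  have sepE: "sep_extension K x0 r0 E"
    and min: "\<And>E'. sep_extension K x0 r0 E' \<Longrightarrow> H1 (E - K) \<le> H1 (E' - K)"
    using assms(1) unfolding min_sep_extension_def by auto
  have "separates E x0 r0" "beta E x0 r0 = beta K x0 r0"
    using sepE unfolding sep_extension_def by auto
  then obtain \<nu> where \<nu>: "norm \<nu> = 1" "flat_dev E x0 r0 \<nu> = beta K x0 r0 * r0" "beta K x0 r0 \<le> 1/2"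
    using separatesE[of E x0 r0] by metis
  have "K \<inter> ball x0 r0 \<subseteq> E" "x0 \<in> K \<inter> ball x0 r0"
    using sepE assms unfolding sep_extension_def by auto
  then have "flat_dev K x0 r0 \<nu> \<le> flat_dev E x0 r0 \<nu>" by (intro flat_dev_mono) blast+
  then have "flat_dev K x0 r0 \<nu> \<le> beta K x0 r0 * r0" using \<nu>(2) by simp
  then have "flat_dev K x0 r0 \<nu> = beta K x0 r0 * r0"
    using flat_dev_attains_beta(2)[of x0 K r0 \<nu> K] assms \<nu>(1) by simp
  then have "sep_extension K x0 r0 ((K \<union> line_normal x0 \<nu>) \<inter> ball x0 r0)"
    using assms \<nu> by (intro sep_extension_Un_line)
  then have "H1 (E - K) \<le> H1 ((K \<union> line_normal x0 \<nu>) \<inter> ball x0 r0 - K)" by (rule min)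
  also have "\<dots> \<le> H1 (line_normal x0 \<nu> \<inter> ball x0 r0)" by (intro H1_mono) auto
  also have "\<dots> \<le> ennreal (2 * r0)" using \<nu>(1) \<open>r0 > 0\<close> by (rule H1_line_normal_ball_le)
  finally show ?thesis using order_le_less_trans by fastforce
qed

lemma components_Diff_island:
  fixes E E' :: "pt set" and x :: pt and r :: real
  defines "W \<equiv> ball x r - E" and "U \<equiv> ball x r - E'"
  assumes "closedin (top_of_set (ball x r)) E" "E' \<subseteq> E" "E - E' \<subseteq> ball y \<rho>"
    and "E \<inter> sphere y \<rho> = {}" "sphere y \<rho> \<subseteq> ball x r"
    and D: "D1 \<subseteq> connected_component_set W z1" "D2 \<subseteq> connected_component_set W z2"
    and ne: "connected_component_set W z1 \<noteq> connected_component_set W z2"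
    and w: "w1 \<in> D1" "w2 \<in> D2" "w1 \<notin> ball y \<rho>" "w2 \<notin> ball y \<rho>"
  shows "D1 \<subseteq> connected_component_set U w1" "D2 \<subseteq> connected_component_set U w2"
    "connected_component_set U w1 \<noteq> connected_component_set U w2"
proof -
  have comp: "connected_component_set W w1 = connected_component_set W z1"
    "connected_component_set W w2 = connected_component_set W z2"
    using connected_component_eq[of w1 W z1] connected_component_eq[of w2 W z2] D w(1,2) by blast+
  have "W \<subseteq> U" unfolding W_def U_def using \<open>E' \<subseteq> E\<close> by (rule Diff_mono[OF subset_refl])
  then show "D1 \<subseteq> connected_component_set U w1" "D2 \<subseteq> connected_component_set U w2"
    using D comp connected_component_mono[of W U] by blast+
  have "open W"
    using \<open>closedin (top_of_set (ball x r)) E\<close> unfolding W_def closedin_def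
    by (auto intro: openin_open_trans)
  moreover have "U - W \<subseteq> ball y \<rho>" "sphere y \<rho> \<subseteq> W"
    unfolding U_def W_def using assms(5-7) by blast+
  moreover have "w1 \<in> W" "w2 \<in> W"
    using w D connected_component_subset[of W z1] connected_component_subset[of W z2] by blast+
  ultimately show "connected_component_set U w1 \<noteq> connected_component_set U w2"
    using connected_component_fill_ball[of W U y \<rho> w1 w2] \<open>W \<subseteq> U\<close> w(3,4) comp ne by simp
qed

lemma separates_Diff_island:
  assumes sep: "separates E x r" and "closedin (top_of_set (ball x r)) E" "r > 0"
    and "E' \<subseteq> E" "E - E' \<subseteq> ball y \<rho>" "E \<inter> sphere y \<rho> = {}" "sphere y \<rho> \<subseteq> ball x r"
    and "\<rho> < r / 10" "x \<in> E'" and \<beta>: "beta E' x r = beta E x r"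
  shows "separates E' x r"
proof -
  obtain \<nu> z1 z2 where \<nu>: "norm \<nu> = 1" "flat_dev E x r \<nu> = beta E x r * r" "beta E x r \<le> 1/2"
    and D: "Dside x r \<nu> 1 (beta E x r * r) \<subseteq> connected_component_set (ball x r - E) z1"
      "Dside x r (- \<nu>) 1 (beta E x r * r) \<subseteq> connected_component_set (ball x r - E) z2"
    and ne: "connected_component_set (ball x r - E) z1 \<noteq> connected_component_set (ball x r - E) z2"
    using sep by (rule separatesE)
  have "E' \<inter> ball x r \<noteq> {}" using \<open>x \<in> E'\<close> \<open>r > 0\<close> by auto
  then have "flat_dev E' x r \<nu> \<le> beta E' x r * r"
    using flat_dev_mono[of E' x r E \<nu>] \<open>E' \<subseteq> E\<close> \<nu>(2) \<beta> by auto
  then have fd: "flat_dev E' x r \<nu> = beta E' x r * r"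
    using flat_dev_attains_beta(2)[of x E' r \<nu> E'] assms \<nu>(1) by simp
  have b: "beta E x r * r \<le> r / 2" using \<nu>(3) \<open>r > 0\<close> by (simp add: field_simps)
  obtain w1 where w1: "w1 \<in> Dside x r \<nu> 1 (beta E x r * r)" "w1 \<notin> cball y \<rho>"
    by (rule Dside_point_outside_cball[OF \<nu>(1) \<open>r > 0\<close> b \<open>\<rho> < r / 10\<close>])
  have "norm (- \<nu>) = 1" using \<nu>(1) by simp
  obtain w2 where w2: "w2 \<in> Dside x r (- \<nu>) 1 (beta E x r * r)" "w2 \<notin> cball y \<rho>"
    by (rule Dside_point_outside_cball[OF \<open>norm (- \<nu>) = 1\<close> \<open>r > 0\<close> b \<open>\<rho> < r / 10\<close>])
  have "w1 \<notin> ball y \<rho>" "w2 \<notin> ball y \<rho>" using w1 w2 by auto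
  from components_Diff_island[OF assms(2,4-7) D ne w1(1) w2(1) this] show ?thesis
    using separatesI[OF \<nu>(1) fd] \<nu>(3) unfolding \<beta> by blast
qed

lemma sep_extension_Diff_ball:
  assumes sepE: "sep_extension K x0 r0 E" and "x0 \<in> K" "r0 > 0"
    and "K \<inter> ball y r = {}" "E \<inter> sphere y r = {}" "cball y r \<subseteq> ball x0 r0" "r < r0 / 10"
  shows "sep_extension K x0 r0 (E - ball y r)"
proof -
  let ?E' = "E - ball y r"
  have E: "E \<subseteq> ball x0 r0" "closedin (top_of_set (ball x0 r0)) E" "coral E" "K \<inter> ball x0 r0 \<subseteq> E"
    "beta E x0 r0 = beta K x0 r0" "separates E x0 r0"
    using sepE unfolding sep_extension_def by auto
  have KE': "K \<inter> ball x0 r0 \<subseteq> ?E'" using E(4) assms(4) by blast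
  have "x0 \<in> K \<inter> ball x0 r0" using assms by simp
  then have "x0 \<in> ?E'" using KE' by blast
  have "beta ?E' x0 r0 \<le> beta E x0 r0"
    using \<open>x0 \<in> ?E'\<close> \<open>r0 > 0\<close> by (intro beta_mono) auto
  moreover have "beta K x0 r0 \<le> beta ?E' x0 r0"
    using \<open>x0 \<in> K \<inter> ball x0 r0\<close> KE' \<open>r0 > 0\<close> by (intro beta_mono) auto
  ultimately have \<beta>: "beta ?E' x0 r0 = beta K x0 r0" using E(5) by simp
  have "closedin (top_of_set (ball x0 r0)) (ball x0 r0 \<inter> - ball y r)"
    by (simp add: closedin_closed_Int closed_Compl)
  moreover have "?E' = E \<inter> (ball x0 r0 \<inter> - ball y r)" using E(1) by blast
  ultimately have "closedin (top_of_set (ball x0 r0)) ?E'" using closedin_Int[OF E(2)] by simp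
  moreover have "?E' = E \<inter> - cball y r" using assms(5) by auto
  then have "coral ?E'" using coral_Int_open[OF E(3), of "- cball y r"] by (simp add: open_Compl)
  moreover have "sphere y r \<subseteq> ball x0 r0" using assms(6) sphere_cball by blast
  then have "separates ?E' x0 r0"
    using separates_Diff_island[OF E(6) E(2) \<open>r0 > 0\<close> Diff_subset _ assms(5) _ assms(7) \<open>x0 \<in> ?E'\<close>]
      \<beta> E(5) by auto
  ultimately show ?thesis
    unfolding sep_extension_def using E(1) KE' \<beta> by blast
qed

lemma min_sep_extension_H1_ge_radius:
  assumes min: "min_sep_extension K x0 r0 E" and "x0 \<in> K" "r0 > 0" "coral K"
    and "closedin (top_of_set (ball x0 r0)) (K \<inter> ball x0 r0)"
    and "y \<in> E" "\<rho> \<le> r0 / 10" "ball y \<rho> \<subseteq> ball x0 r0" "K \<inter> ball y \<rho> = {}"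
  shows "ennreal \<rho> \<le> H1 (E \<inter> ball y \<rho>)"
proof (rule ccontr)
  assume "\<not> ?thesis"
  then have "H1 (E \<inter> ball y \<rho>) < ennreal \<rho>" by simp
  then obtain r where r: "0 < r" "r < \<rho>" "E \<inter> sphere y r = {}" by (rule exists_sphere_avoiding)
  have sepE: "sep_extension K x0 r0 E"
    and minE: "\<And>E'. sep_extension K x0 r0 E' \<Longrightarrow> H1 (E - K) \<le> H1 (E' - K)"
    using min unfolding min_sep_extension_def by auto
  have "cball y r \<subseteq> ball y \<rho>" using r(2) by (simp add: cball_subset_ball_iff)
  then have "cball y r \<subseteq> ball x0 r0" "K \<inter> ball y r = {}"
    using assms(8,9) ball_subset_cball[of y r] by blast+
  then have "sep_extension K x0 r0 (E - ball y r)"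
    using sep_extension_Diff_ball[OF sepE assms(2,3) _ r(3)] r(2) assms(7) by simp
  then have le: "H1 (E - K) \<le> H1 (E - ball y r - K)" by (rule minE)
  have "closedin (top_of_set (ball x0 r0)) E" using sepE unfolding sep_extension_def by blast
  then obtain T where T: "closed T" "E = ball x0 r0 \<inter> T" by (auto simp: closedin_closed)
  then have "T \<inter> sphere y r = {}" using r(3) \<open>cball y r \<subseteq> ball x0 r0\<close> sphere_cball by blast
  then have "H1 (E - ball y r - K) + H1 (E \<inter> ball y r) \<le> H1 ((E - ball y r - K) \<union> (E \<inter> ball y r))"
    using T by (intro H1_add_inside_outside_sphere) auto
  also have "(E - ball y r - K) \<union> (E \<inter> ball y r) = E - K"
    using \<open>K \<inter> ball y r = {}\<close> by blast
  also have "H1 (E - K) \<le> H1 (E - ball y r - K) + 0" using le by simp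
  finally have "H1 (E - ball y r - K) + H1 (E \<inter> ball y r) \<le> H1 (E - ball y r - K) + 0" .
  moreover have "H1 (E - ball y r - K) \<le> H1 (E - K)" by (rule H1_mono) blast
  then have "H1 (E - ball y r - K) < \<infinity>"
    using min_sep_extension_H1_finite[OF min assms(2-5)] by simp
  ultimately have "H1 (E \<inter> ball y r) = 0"
    unfolding ennreal_add_left_cancel_le by (auto simp: top_unique)
  moreover have "coral E" using sepE unfolding sep_extension_def by blast
  then have "0 < H1 (E \<inter> ball y r)" using \<open>y \<in> E\<close> r(1) unfolding coral_def by blast
  ultimately show False by simp
qed


section \<open>Flatness of the extension above the stopping time\<close>

lemma sep_extension_beta_le:
  assumes "sep_extension K x0 r0 E" "x \<in> E" "t > 0"
  shows "beta E x t \<le> 2 * beta K x0 r0 * (r0 / t)"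
proof -
  have "E \<subseteq> ball x0 r0" "separates E x0 r0" "beta E x0 r0 = beta K x0 r0"
    using assms(1) unfolding sep_extension_def by auto
  then obtain \<nu> where \<nu>: "norm \<nu> = 1" "flat_dev E x0 r0 \<nu> = beta K x0 r0 * r0"
    using separatesE[of E x0 r0] by metis
  have slab: "\<bar>(p - x0) \<bullet> \<nu>\<bar> \<le> beta K x0 r0 * r0" if "p \<in> E" for p
    using abs_inner_le_flat_dev[OF \<nu>(1), of p E x0 r0] \<nu>(2) that \<open>E \<subseteq> ball x0 r0\<close> by auto
  have "\<bar>(p - x) \<bullet> \<nu>\<bar> \<le> 2 * (beta K x0 r0 * r0)" if "p \<in> E" for p
    using slab[OF that] slab[OF \<open>x \<in> E\<close>] by (simp add: inner_diff_left abs_le_iff)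
  then have "beta E x t \<le> 2 * (beta K x0 r0 * r0) / t"
    using \<nu>(1) assms(2,3) by (intro beta_le_slab) auto
  then show ?thesis by simp
qed

lemma abs_inner_le_of_no_islands:
  assumes islands: "\<And>p \<rho>. p \<in> E \<inter> ball x t \<Longrightarrow> 0 < \<rho> \<Longrightarrow> \<rho> < t \<Longrightarrow> K \<inter> ball p \<rho> = {}
      \<Longrightarrow> ennreal \<rho> \<le> H1 (E \<inter> ball p \<rho>)"
    and K_near: "\<And>k. k \<in> K \<inter> ball x (2 * t) \<Longrightarrow> \<bar>(k - x) \<bullet> \<nu>\<bar> < c"
    and small: "H1 (E \<inter> ball x (2 * t) - K) \<le> ennreal c"
    and "0 \<le> c" "norm \<nu> = 1" and p: "p \<in> E \<inter> ball x t"
  shows "\<bar>(p - x) \<bullet> \<nu>\<bar> \<le> 2 * c"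
proof (rule ccontr)
  assume far: "\<not> \<bar>(p - x) \<bullet> \<nu>\<bar> \<le> 2 * c"
  define \<rho> where "\<rho> = \<bar>(p - x) \<bullet> \<nu>\<bar> - c"
  have "c < \<rho>" using far unfolding \<rho>_def by simp
  have "\<bar>(p - x) \<bullet> \<nu>\<bar> \<le> norm (p - x)"
    using Cauchy_Schwarz_ineq2[of "p - x" \<nu>] \<open>norm \<nu> = 1\<close> by simp
  then have "\<rho> < t" using p \<open>0 \<le> c\<close> unfolding \<rho>_def by (simp add: dist_norm norm_minus_commute)
  have sub: "ball p \<rho> \<subseteq> ball x (2 * t)"
  proof
    fix z assume "z \<in> ball p \<rho>"
    then show "z \<in> ball x (2 * t)" using dist_triangle[of x z p] p \<open>\<rho> < t\<close> by simp
  qed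
  have "K \<inter> ball p \<rho> = {}"
  proof (rule ccontr)
    assume "K \<inter> ball p \<rho> \<noteq> {}"
    then obtain k where k: "k \<in> K" "dist p k < \<rho>" by auto
    have "\<bar>(p - k) \<bullet> \<nu>\<bar> \<le> dist p k"
      using Cauchy_Schwarz_ineq2[of "p - k" \<nu>] \<open>norm \<nu> = 1\<close> by (simp add: dist_norm)
    moreover have "\<bar>(k - x) \<bullet> \<nu>\<bar> < c" using K_near k sub by auto
    moreover have "(p - x) \<bullet> \<nu> = (p - k) \<bullet> \<nu> + (k - x) \<bullet> \<nu>" by (simp add: inner_diff_left)
    ultimately show False using k(2) unfolding \<rho>_def by linarith
  qed
  then have "ennreal \<rho> \<le> H1 (E \<inter> ball p \<rho>)"
    using islands p \<open>c < \<rho>\<close> \<open>0 \<le> c\<close> \<open>\<rho> < t\<close> by simp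
  also have "\<dots> \<le> H1 (E \<inter> ball x (2 * t) - K)"
    using sub \<open>K \<inter> ball p \<rho> = {}\<close> by (intro H1_mono) blast
  also have "\<dots> \<le> ennreal c" by (rule small)
  finally show False using \<open>c < \<rho>\<close> \<open>0 \<le> c\<close> by (simp add: ennreal_le_iff)
qed

lemma beta_le_of_no_islands:
  assumes islands: "\<And>p \<rho>. p \<in> E \<inter> ball x t \<Longrightarrow> 0 < \<rho> \<Longrightarrow> \<rho> < t \<Longrightarrow> K \<inter> ball p \<rho> = {}
      \<Longrightarrow> ennreal \<rho> \<le> H1 (E \<inter> ball p \<rho>)"
    and "x \<in> K" "x \<in> E" "t > 0"
    and \<beta>: "beta K x (2 * t) \<le> a" and small: "H1 (E \<inter> ball x (2 * t) - K) \<le> ennreal (a * (2 * t))"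
  shows "beta E x t \<le> 4 * a"
proof (rule field_le_epsilon)
  fix \<epsilon> :: real assume "\<epsilon> > 0"
  define c where "c = 2 * a * t + \<epsilon> * t / 2"
  have ne: "K \<inter> ball x (2 * t) \<noteq> {}" using \<open>x \<in> K\<close> \<open>t > 0\<close> by auto
  then have "0 \<le> a" using beta_nonneg[of K x "2 * t"] \<beta> \<open>t > 0\<close> by linarith
  have "beta K x (2 * t) * (2 * t) \<le> a * (2 * t)" using \<beta> \<open>t > 0\<close> by simp
  moreover have "a * (2 * t) < c" using \<open>\<epsilon> > 0\<close> \<open>t > 0\<close> unfolding c_def by simp
  ultimately have "beta K x (2 * t) * (2 * t) < c" by linarith
  then obtain \<nu> where \<nu>: "norm \<nu> = 1" "flat_dev K x (2 * t) \<nu> < c"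
    using exists_flat_dev_less[OF ne] \<open>t > 0\<close> by auto
  have K_near: "\<bar>(k - x) \<bullet> \<nu>\<bar> < c" if "k \<in> K \<inter> ball x (2 * t)" for k
    using abs_inner_le_flat_dev[OF \<nu>(1) that] \<nu>(2) by simp
  have "a * (2 * t) \<le> c" "0 \<le> c" using \<open>0 \<le> a\<close> \<open>\<epsilon> > 0\<close> \<open>t > 0\<close> unfolding c_def by simp_all
  then have "H1 (E \<inter> ball x (2 * t) - K) \<le> ennreal c"
    using small by (meson ennreal_leI order_trans)
  then have "\<bar>(p - x) \<bullet> \<nu>\<bar> \<le> 2 * c" if "p \<in> E \<inter> ball x t" for p
    using abs_inner_le_of_no_islands[OF islands K_near _ \<open>0 \<le> c\<close> \<nu>(1) that] by blast
  then have "beta E x t \<le> 2 * c / t" using \<nu>(1) \<open>x \<in> E\<close> \<open>t > 0\<close> by (intro beta_le_slab) auto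
  also have "\<dots> = 4 * a + \<epsilon>" unfolding c_def using \<open>t > 0\<close> by (simp add: field_simps)
  finally show "beta E x t \<le> 4 * a + \<epsilon>" .
qed

lemma min_sep_extension_beta_le:
  assumes min: "min_sep_extension K x0 r0 E" and "x0 \<in> K" "r0 > 0" "coral K"
    and "closedin (top_of_set (ball x0 r0)) (K \<inter> ball x0 r0)"
    and x: "x \<in> K" "x \<in> E" "dist x0 x < 9 * r0 / 10" and t: "t > 0" "2 * t \<le> r0 / 10"
    and "beta K x (2 * t) \<le> a" "H1 (E \<inter> ball x (2 * t) - K) \<le> ennreal (a * (2 * t))"
  shows "beta E x t \<le> 4 * a"
proof -
  have "ennreal \<rho> \<le> H1 (E \<inter> ball p \<rho>)"
    if p: "p \<in> E \<inter> ball x t" and \<rho>: "0 < \<rho>" "\<rho> < t" "K \<inter> ball p \<rho> = {}" for p \<rho>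
  proof (rule min_sep_extension_H1_ge_radius[OF min assms(2-5)])
    show "ball p \<rho> \<subseteq> ball x0 r0"
    proof
      fix z assume "z \<in> ball p \<rho>"
      then have "dist x0 z < 9 * r0 / 10 + t + \<rho>"
        using p x dist_triangle[of x0 z x] dist_triangle[of x z p] by simp
      then show "z \<in> ball x0 r0" using \<rho> t by simp
    qed
  qed (use p \<rho> t in auto)
  then show ?thesis using beta_le_of_no_islands x(1,2) t(1) assms(11,12) by blast
qed

lemma good_ball_above_sigma:
  assumes "sigma K E x0 r0 x < t" "r0 > 0" "t \<le> s" "s \<le> r0 / 10"
  shows "good_ball K E x0 r0 x s"
proof -
  define S where "S = {r. 0 < r \<and> (\<forall>t. r \<le> t \<and> t \<le> r0 / 10 \<longrightarrow> good_ball K E x0 r0 x t)}"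
  have "r0 \<in> S" "bdd_below S" using \<open>r0 > 0\<close> unfolding S_def by (auto intro: bdd_belowI[of _ 0])
  moreover have "Inf S < t" using assms(1) unfolding sigma_def S_def .
  ultimately obtain r where "r \<in> S" "r < t" using cInf_less_iff by blast
  then show ?thesis using assms(3,4) unfolding S_def by auto
qed

theorem lemma4p25:
  fixes C :: "mat2 \<Rightarrow> mat2" and c0 :: real and \<Omega> :: "pt set" and h :: "real \<Rightarrow> ennreal"
    and u :: "pt \<Rightarrow> pt" and K E :: "pt set" and x0 :: pt and r0 :: real
  assumes "open \<Omega>"
    and "elasticity_tensor C c0"
    and "gauge h"
    and "griffith_almost_min C \<Omega> h u K"
    and "x0 \<in> K" and "r0 > 0" and "ball x0 r0 \<subseteq> \<Omega>"
    and "beta K x0 r0 \<le> tau / 10"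
    and "min_sep_extension K x0 r0 E"
  shows "\<forall>x \<in> K \<inter> ball x0 (9*r0/10). \<forall>t. sigma K E x0 r0 x < t \<and> t \<le> r0/10 \<longrightarrow>
           beta K x t \<le> tau \<and> beta E x t \<le> 4 * tau"
proof (intro ballI allI impI)
  fix x t assume x: "x \<in> K \<inter> ball x0 (9*r0/10)" and t: "sigma K E x0 r0 x < t \<and> t \<le> r0/10"
  have good: "good_ball K E x0 r0 x s" if "t \<le> s" "s \<le> r0 / 10" for s
    using good_ball_above_sigma t \<open>r0 > 0\<close> that by blast
  then have "t > 0" "beta K x t \<le> tau" using t unfolding good_ball_def by auto
  have "coral K" "closedin (top_of_set \<Omega>) K"
    using assms(4) unfolding griffith_almost_min_def admissible_def by auto
  then have Kc: "closedin (top_of_set (ball x0 r0)) (K \<inter> ball x0 r0)"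
    using closedin_closed_subset assms(7) by blast
  have "K \<inter> ball x0 r0 \<subseteq> E"
    using assms(9) unfolding min_sep_extension_def sep_extension_def by blast
  then have "x \<in> E" using x \<open>r0 > 0\<close> by auto
  have "beta E x t \<le> 4 * tau"
  proof (cases "2 * t \<le> r0 / 10")
    case True
    then have "beta K x (2 * t) \<le> tau" "H1 (E \<inter> ball x (2 * t) - K) \<le> ennreal (tau * (2 * t))"
      using good[of "2 * t"] \<open>t > 0\<close> unfolding good_ball_def by auto
    moreover have "x \<in> K" "dist x0 x < 9 * r0 / 10" using x by auto
    ultimately show ?thesis
      using min_sep_extension_beta_le[OF assms(9,5,6) \<open>coral K\<close> Kc _ \<open>x \<in> E\<close> _ \<open>t > 0\<close> True]
      by blast
  next
    case False
    have "beta E x t \<le> 2 * beta K x0 r0 * (r0 / t)"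
      using assms(9) \<open>x \<in> E\<close> \<open>t > 0\<close> unfolding min_sep_extension_def
      by (intro sep_extension_beta_le) auto
    moreover have "beta K x0 r0 * (r0 / t) \<le> tau / 10 * 20"
      using assms(8) False \<open>t > 0\<close> \<open>r0 > 0\<close> by (intro mult_mono) (auto simp: field_simps tau_def)
    ultimately show ?thesis by simp
  qed
  with \<open>beta K x t \<le> tau\<close> show "beta K x t \<le> tau \<and> beta E x t \<le> 4 * tau" by simp
qed

end
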